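(* Let $\mathcal X$ be a real normed space and $\mathcal Y$ a normed space. Let $c:\mathcal X\to\mathcal Y$ be an orthogonally constant mapping. If $x,y\in\mathcal X$ satisfy $\|x\|=\|y\|$, then $c(x)=c(y)$.
   Context: For $x,y$ in a real normed space $\mathcal X$, isosceles orthogonality is defined by $x\perp y$ if and only if $\|x+y\|=\|x-y\|$. A mapping $c:\mathcal X\to\mathcal Y$ is called orthogonally constant if $c(x+y)=c(x-y)$ for all $x,y\in\mathcal X$ with $x\perp y$. *)

theory Defs
  imports "HOL-Analysis.Analysis"
begin

definition iso_orth :: "'a::real_normed_vector \<Rightarrow> 'a \<Rightarrow> bool" where
  "iso_orth x y \<longleftrightarrow> norm (x + y) = norm (x - y)"

definition orth_constant :: "('a::real_normed_vector \<Rightarrow> 'b) \<Rightarrow> bool" where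
  "orth_constant c \<longleftrightarrow> (\<forall>x y. iso_orth x y \<longrightarrow> c (x + y) = c (x - y))"

end

theory Submission
  imports Defs
begin

lemma orth_constantD:
  assumes "orth_constant c" and "iso_orth x y"
  shows "c (x + y) = c (x - y)"
  using assms unfolding orth_constant_def by blast

lemma half_sum_add_half_diff:
  fixes x y :: "'a::real_vector"
  shows "(1/2) *\<^sub>R (x + y) + (1/2) *\<^sub>R (x - y) = x"
  by (simp add: algebra_simps flip: scaleR_add_left)

lemma half_sum_diff_half_diff:
  fixes x y :: "'a::real_vector"
  shows "(1/2) *\<^sub>R (x + y) - (1/2) *\<^sub>R (x - y) = y"
  by (simp add: algebra_simps flip: scaleR_add_left)

lemma iso_orth_half_sum_half_diff_iff:
  fixes x y :: "'a::real_normed_vector"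
  shows "iso_orth ((1/2) *\<^sub>R (x + y)) ((1/2) *\<^sub>R (x - y)) \<longleftrightarrow> norm x = norm y"
  unfolding iso_orth_def half_sum_add_half_diff half_sum_diff_half_diff ..

theorem lemma2p2:
  fixes c :: "'a::real_normed_vector \<Rightarrow> 'b::real_normed_vector"
  assumes "orth_constant c"
    and "norm x = norm y"
  shows "c x = c y"
proof -
  have "iso_orth ((1/2) *\<^sub>R (x + y)) ((1/2) *\<^sub>R (x - y))"
    using assms(2) by (simp only: iso_orth_half_sum_half_diff_iff)
  from orth_constantD [OF assms(1) this] show ?thesis
    by (simp only: half_sum_add_half_diff half_sum_diff_half_diff)
qed

end
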